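(* Let $f:\mathbb{R}^n\to\mathbb{R}$ be a polynomial of degree at most $4$, let $\mu_f$ be its Steklov function, and let $C:=\sum_{i=1}^n\nabla^2 f_{ii}$, where $f_{ii}=\partial^2 f/\partial x_i^2$. Assume the smallest eigenvalue $\lambda_n(C)$ of $C$ is positive, and fix $L>0$. Let $\theta_L:=\min_{x\in B[0,L]}\lambda_n(\nabla^2 f(x))$, where $\lambda_n(\cdot)$ denotes the smallest eigenvalue and $B[0,L]=\{x:\|x\|\le L\}$, and set \[ t_0:=\sqrt{\frac{6|\theta_L|}{\lambda_n(C)}}. \] Then $\mu_f$ is convex over $B[0,L]\times(t_0,+\infty)$, i.e., $\nabla_{xx}\mu_f(x,t)\succeq 0$ for all $(x,t)\in B[0,L]\times(t_0,+\infty)$.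
   Context: The Steklov function of a continuous $f:\mathbb{R}^n\to\mathbb{R}$ is $\mu_f(x,t)=\frac{1}{(2t)^n}\int_{x_n-t}^{x_n+t}\cdots\int_{x_1-t}^{x_1+t} f(\tau)\,d\tau_1\cdots d\tau_n$ for $x\in\mathbb{R}^n$, $t>0$; $\nabla_{xx}\mu_f$ is its Hessian with respect to $x$. For a polynomial of degree at most $4$, $C=\sum_i\nabla^2 f_{ii}$ is a constant symmetric matrix. $\|\cdot\|$ is the Euclidean norm. *)

theory Defs
  imports "HOL-Analysis.Analysis"
begin

definition monomials_le :: "nat \<Rightarrow> ('n::finite \<Rightarrow> nat) set" where
  "monomials_le d = {\<alpha>. (\<Sum>i\<in>UNIV. \<alpha> i) \<le> d}"

definition is_poly_deg_le :: "nat \<Rightarrow> (real^'n::finite \<Rightarrow> real) \<Rightarrow> bool" where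
  "is_poly_deg_le d f \<longleftrightarrow> (\<exists>c :: ('n \<Rightarrow> nat) \<Rightarrow> real.
      f = (\<lambda>x. \<Sum>\<alpha>\<in>monomials_le d. c \<alpha> * (\<Prod>i\<in>UNIV. (x $ i) ^ \<alpha> i)))"

definition partial :: "'n::finite \<Rightarrow> (real^'n \<Rightarrow> real) \<Rightarrow> real^'n \<Rightarrow> real" where
  "partial i g x = deriv (\<lambda>s. g (x + s *\<^sub>R axis i 1)) 0"

definition hessian :: "(real^'n::finite \<Rightarrow> real) \<Rightarrow> real^'n \<Rightarrow> real^'n^'n" where
  "hessian g x = (\<chi> i j. partial i (partial j g) x)"

text \<open>Real eigenvalues of a square matrix, and the smallest one (for symmetric matrices all
  eigenvalues are real and there are finitely many, at least one).\<close>
definition eigenvalues :: "real^'n^'n \<Rightarrow> real set" where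
  "eigenvalues A = {e. \<exists>v. v \<noteq> 0 \<and> A *v v = e *\<^sub>R v}"

definition lambda_min :: "real^'n^'n \<Rightarrow> real" where
  "lambda_min A = Min (eigenvalues A)"

definition psd :: "real^'n^'n \<Rightarrow> bool" where
  "psd A \<longleftrightarrow> (\<forall>v. v \<bullet> (A *v v) \<ge> 0)"

definition steklov :: "(real^'n::finite \<Rightarrow> real) \<Rightarrow> real^'n \<Rightarrow> real \<Rightarrow> real" where
  "steklov f x t = (1 / (2 * t) ^ CARD('n)) *
     integral (cbox (x - (\<chi> i. t)) (x + (\<chi> i. t))) f"

end

theory Submission
  imports Defs
begin

(* Averaging over the cube [-t,t]^n kills odd monomials and turns x_k^2 into x_k^2 + t^2/3, so the
   cube average of a polynomial g of degree at most 2 is g(x) + (t^2/6) times its Laplacian.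
   Differentiating under the integral, the Hessian of mu_f is the cube average of the Hessian of f,
   whose entries are quadratic when deg f <= 4; hence it equals the Hessian of f at x plus (t^2/6) C,
   where C is constant. Its smallest eigenvalue is therefore at least theta_L + t^2 lambda_n(C) / 6,
   which is positive as soon as t > t_0. *)

definition monomial :: "('n::finite \<Rightarrow> nat) \<Rightarrow> real^'n \<Rightarrow> real" where
  "monomial \<alpha> x = (\<Prod>i\<in>UNIV. (x $ i) ^ \<alpha> i)"

definition dec_exp :: "'n \<Rightarrow> ('n \<Rightarrow> nat) \<Rightarrow> 'n \<Rightarrow> nat" where
  "dec_exp j \<alpha> = \<alpha>(j := \<alpha> j - 1)"

lemma is_poly_deg_le_iff_monomial:
  "is_poly_deg_le d f \<longleftrightarrow> (\<exists>c. f = (\<lambda>x. \<Sum>\<alpha>\<in>monomials_le d. c \<alpha> * monomial \<alpha> x))"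
  by (simp add: is_poly_deg_le_def monomial_def)

lemma finite_monomials_le: "finite (monomials_le d :: ('n::finite \<Rightarrow> nat) set)"
proof (rule finite_subset)
  show "monomials_le d \<subseteq> PiE UNIV (\<lambda>_::'n. {..d})"
  proof
    fix \<alpha> :: "'n \<Rightarrow> nat" assume "\<alpha> \<in> monomials_le d"
    then have "\<alpha> i \<le> d" for i
      using member_le_sum[of i UNIV \<alpha>] by (simp add: monomials_le_def)
    then show "\<alpha> \<in> PiE UNIV (\<lambda>_. {..d})"
      by auto
  qed
qed (simp add: finite_PiE)

lemma monomial_zero_exp [simp]: "monomial (\<lambda>_. 0) x = 1"
  by (simp add: monomial_def)

lemma monomial_along_axis:
  "monomial \<alpha> (w + s *\<^sub>R axis j 1) = (w $ j + s) ^ \<alpha> j * (\<Prod>k\<in>UNIV - {j}. (w $ k) ^ \<alpha> k)"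
  unfolding monomial_def by (subst prod.remove[of UNIV j]) (auto simp: axis_def intro!: prod.cong)

lemma has_real_derivative_monomial_axis:
  "((\<lambda>s. monomial \<alpha> (w + s *\<^sub>R axis j 1)) has_real_derivative
     real (\<alpha> j) * monomial (dec_exp j \<alpha>) (w + s *\<^sub>R axis j 1)) (at s)"
proof -
  have "monomial (dec_exp j \<alpha>) (w + s *\<^sub>R axis j 1) = (w $ j + s) ^ (\<alpha> j - 1) * (\<Prod>k\<in>UNIV - {j}. (w $ k) ^ \<alpha> k)"
    unfolding monomial_along_axis by (auto simp: dec_exp_def intro!: prod.cong)
  then show ?thesis
    unfolding monomial_along_axis by (auto intro!: derivative_eq_intros)
qed

lemma has_real_derivative_monomial_sum_axis:
  "((\<lambda>s. \<Sum>a\<in>S. d a * monomial (\<tau> a) (w + s *\<^sub>R axis j 1)) has_real_derivative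
     (\<Sum>a\<in>S. d a * real (\<tau> a j) * monomial (dec_exp j (\<tau> a)) (w + s *\<^sub>R axis j 1))) (at s)"
  unfolding mult.assoc by (intro DERIV_sum DERIV_cmult has_real_derivative_monomial_axis)

lemma partial_monomial_sum:
  "partial j (\<lambda>x. \<Sum>a\<in>S. d a * monomial (\<tau> a) x) =
   (\<lambda>x. \<Sum>a\<in>S. d a * real (\<tau> a j) * monomial (dec_exp j (\<tau> a)) x)"
  unfolding partial_def
  by (rule ext, rule DERIV_imp_deriv, rule has_real_derivative_monomial_sum_axis[of _ _ _ _ _ 0, simplified])

lemma continuous_on_monomial_sum: "continuous_on A (\<lambda>x. \<Sum>a\<in>S. d a * monomial (\<tau> a) x)"
  unfolding monomial_def by (intro continuous_intros)

lemma sum_dec_exp: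
  fixes \<alpha> :: "'n::finite \<Rightarrow> nat"
  assumes "\<alpha> j > 0"
  shows "sum (dec_exp j \<alpha>) UNIV = sum \<alpha> UNIV - 1"
proof -
  have "sum (dec_exp j \<alpha>) UNIV = dec_exp j \<alpha> j + sum (dec_exp j \<alpha>) (UNIV - {j})"
       "sum \<alpha> UNIV = \<alpha> j + sum \<alpha> (UNIV - {j})"
    by (simp_all add: sum.remove)
  moreover have "sum (dec_exp j \<alpha>) (UNIV - {j}) = sum \<alpha> (UNIV - {j})"
    by (rule sum.cong) (auto simp: dec_exp_def)
  ultimately show ?thesis using assms by (simp add: dec_exp_def)
qed

lemma is_poly_deg_le_mono:
  assumes "is_poly_deg_le d f" and "d \<le> d'"
  shows "is_poly_deg_le d' f"
proof -
  obtain c where f: "f = (\<lambda>x. \<Sum>\<alpha>\<in>monomials_le d. c \<alpha> * monomial \<alpha> x)"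
    using assms by (auto simp: is_poly_deg_le_iff_monomial)
  have "monomials_le d \<subseteq> monomials_le d'"
    using \<open>d \<le> d'\<close> by (auto simp: monomials_le_def)
  then have "f = (\<lambda>x. \<Sum>\<alpha>\<in>monomials_le d'. (if \<alpha> \<in> monomials_le d then c \<alpha> else 0) * monomial \<alpha> x)"
    unfolding f by (intro ext sum.mono_neutral_cong_left finite_monomials_le) auto
  then show ?thesis
    unfolding is_poly_deg_le_iff_monomial
    by (intro exI[of _ "\<lambda>\<alpha>. if \<alpha> \<in> monomials_le d then c \<alpha> else 0"])
qed

lemma is_poly_deg_le_partial:
  assumes "is_poly_deg_le d f"
  shows "is_poly_deg_le (d - 1) (partial j f)"
proof -
  define e where "e = d - 1"
  have "is_poly_deg_le (Suc e) f"
    using assms by (rule is_poly_deg_le_mono) (simp add: e_def)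
  then obtain c where f: "f = (\<lambda>x. \<Sum>\<alpha>\<in>monomials_le (Suc e). c \<alpha> * monomial \<alpha> x)"
    by (auto simp: is_poly_deg_le_iff_monomial)
  let ?inc = "\<lambda>\<beta>. \<beta>(j := Suc (\<beta> j))"
  let ?P = "{\<alpha> \<in> monomials_le (Suc e). \<alpha> j \<noteq> 0}"
  have "partial j f = (\<lambda>x. \<Sum>\<alpha>\<in>monomials_le (Suc e). c \<alpha> * real (\<alpha> j) * monomial (dec_exp j \<alpha>) x)"
    unfolding f partial_monomial_sum ..
  also have "\<dots> = (\<lambda>x. \<Sum>\<alpha>\<in>?P. c \<alpha> * real (\<alpha> j) * monomial (dec_exp j \<alpha>) x)"
    by (intro ext sum.mono_neutral_right finite_monomials_le) auto
  also have "\<dots> = (\<lambda>x. \<Sum>\<beta>\<in>monomials_le e. c (?inc \<beta>) * real (Suc (\<beta> j)) * monomial \<beta> x)"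
  proof (rule ext, rule sum.reindex_bij_witness[of _ ?inc "dec_exp j"])
    fix \<beta> :: "'a \<Rightarrow> nat" assume "\<beta> \<in> monomials_le e"
    moreover have "sum (?inc \<beta>) UNIV = Suc (sum \<beta> UNIV)"
      by (simp add: sum.remove[of UNIV j] sum.cong[of "UNIV - {j}" _ "?inc \<beta>" \<beta>])
    ultimately show "?inc \<beta> \<in> ?P" by (auto simp: monomials_le_def)
  next
    fix \<alpha> assume "\<alpha> \<in> ?P"
    then show "dec_exp j \<alpha> \<in> monomials_le e"
      using sum_dec_exp[of \<alpha> j] by (auto simp: monomials_le_def)
  qed (auto simp: dec_exp_def)
  finally show ?thesis
    unfolding e_def[symmetric] is_poly_deg_le_iff_monomial
    by (intro exI[of _ "\<lambda>\<beta>. c (?inc \<beta>) * real (Suc (\<beta> j))"]) simp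
qed

lemma is_poly_deg_le_partial':
  assumes "is_poly_deg_le d f"
  shows "is_poly_deg_le d (partial j f)"
  using is_poly_deg_le_mono[OF is_poly_deg_le_partial[OF assms]] by simp

lemma continuous_on_is_poly_deg_le:
  assumes "is_poly_deg_le d f"
  shows "continuous_on A f"
  using assms continuous_on_monomial_sum by (auto simp: is_poly_deg_le_iff_monomial)

lemma has_real_derivative_is_poly_deg_le_axis:
  assumes "is_poly_deg_le d f"
  shows "((\<lambda>s. f (w + s *\<^sub>R axis j 1)) has_real_derivative partial j f (w + s *\<^sub>R axis j 1)) (at s)"
  using assms has_real_derivative_monomial_sum_axis
  by (auto simp: is_poly_deg_le_iff_monomial partial_monomial_sum)

lemma is_poly_deg_le_cmult:
  assumes "is_poly_deg_le d f"
  shows "is_poly_deg_le d (\<lambda>x. K * f x)"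
proof -
  obtain c where "f = (\<lambda>x. \<Sum>\<alpha>\<in>monomials_le d. c \<alpha> * monomial \<alpha> x)"
    using assms by (auto simp: is_poly_deg_le_iff_monomial)
  then show ?thesis
    unfolding is_poly_deg_le_iff_monomial
    by (intro exI[of _ "\<lambda>\<alpha>. K * c \<alpha>"]) (simp add: sum_distrib_left mult.assoc)
qed

lemma partial_cmult:
  assumes "is_poly_deg_le d f"
  shows "partial j (\<lambda>x. K * f x) = (\<lambda>x. K * partial j f x)"
  unfolding partial_def
  by (rule ext, rule DERIV_imp_deriv, rule DERIV_cmult)
     (use has_real_derivative_is_poly_deg_le_axis[OF assms, of _ _ 0] in \<open>simp add: partial_def\<close>)

lemma is_poly_deg_le_0_constant:
  fixes f :: "real^'n::finite \<Rightarrow> real"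
  assumes "is_poly_deg_le 0 f"
  shows "f x = f y"
proof -
  obtain c where f: "f = (\<lambda>x. \<Sum>\<alpha>\<in>monomials_le 0. c \<alpha> * monomial \<alpha> x)"
    using assms by (auto simp: is_poly_deg_le_iff_monomial)
  have "monomials_le 0 = {\<lambda>_::'n. 0}"
    by (auto simp: monomials_le_def)
  then show ?thesis
    unfolding f by simp
qed

lemma dec_exp_commute: "dec_exp i (dec_exp j \<alpha>) = dec_exp j (dec_exp i \<alpha>)"
  by (cases "i = j") (auto simp: dec_exp_def fun_eq_iff)

lemma partial_commute:
  assumes "is_poly_deg_le d f"
  shows "partial i (partial j f) = partial j (partial i f)"
proof -
  obtain c where f: "f = (\<lambda>x. \<Sum>\<alpha>\<in>monomials_le d. c \<alpha> * monomial \<alpha> x)"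
    using assms by (auto simp: is_poly_deg_le_iff_monomial)
  have "c \<alpha> * real (\<alpha> j) * real (dec_exp j \<alpha> i) = c \<alpha> * real (\<alpha> i) * real (dec_exp i \<alpha> j)" for \<alpha>
    by (cases "i = j") (auto simp: dec_exp_def)
  then show ?thesis
    by (simp only: f partial_monomial_sum dec_exp_commute[of i j])
qed

lemma hessian_symmetric:
  assumes "is_poly_deg_le d f"
  shows "transpose (hessian f x) = hessian f x"
  using partial_commute[OF assms] by (simp add: vec_eq_iff transpose_def hessian_def)

lemma partial_partial_commute:
  assumes "is_poly_deg_le d f"
  shows "partial k (partial l (partial i (partial j f))) = partial i (partial j (partial k (partial l f)))"
  using assms by (metis is_poly_deg_le_partial' partial_commute)

definition cube :: "real \<Rightarrow> (real^'n::finite) set" where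
  "cube t = cbox (-(\<chi> i. t)) (\<chi> i. t)"

lemma lborel_integral_prod:
  fixes f :: "'a::euclidean_space \<Rightarrow> real \<Rightarrow> real"
  assumes int: "\<And>b. b \<in> Basis \<Longrightarrow> integrable lborel (f b)"
  shows "integral\<^sup>L lborel (\<lambda>x. \<Prod>b\<in>Basis. f b (x \<bullet> b)) = (\<Prod>b\<in>Basis. integral\<^sup>L lborel (f b))"
proof -
  have [measurable]: "\<And>b. b \<in> Basis \<Longrightarrow> f b \<in> borel_measurable borel"
    using int by (auto dest: borel_measurable_integrable simp: measurable_lborel1)
  interpret P: product_sigma_finite "\<lambda>b::'a. (lborel::real measure)"
    by (simp add: product_sigma_finite_def lborel.sigma_finite_measure_axioms)
  have "integral\<^sup>L lborel (\<lambda>x. \<Prod>b\<in>Basis. f b (x \<bullet> b)) =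
     (\<integral>x. (\<Prod>b\<in>Basis. f b ((\<Sum>b\<in>Basis. x b *\<^sub>R b) \<bullet> b)) \<partial>(\<Pi>\<^sub>M b\<in>Basis. lborel))"
    by (subst lborel_eq) (subst integral_distr, auto)
  also have "\<dots> = (\<integral>x. (\<Prod>b\<in>Basis. f b (x b)) \<partial>(\<Pi>\<^sub>M b\<in>Basis. lborel))"
    by (intro Bochner_Integration.integral_cong refl prod.cong)
       (auto simp: inner_sum_left inner_Basis if_distrib cong: if_cong)
  also have "\<dots> = (\<Prod>b\<in>Basis. integral\<^sup>L lborel (f b))"
    by (rule P.product_integral_prod) (auto intro: int)
  finally show ?thesis .
qed

lemma integral_cube_prod:
  fixes h :: "'n::finite \<Rightarrow> real \<Rightarrow> real"
  assumes cont: "\<And>k. continuous_on UNIV (h k)"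
  shows "integral (cube t) (\<lambda>z. \<Prod>k\<in>UNIV. h k (z $ k))
         = (\<Prod>k\<in>UNIV. integral {-t..t} (h k))"
proof -
  define g where "g k = (\<lambda>s. indicator {-t..t} s * h k s)" for k
  have contI: "continuous_on {-t..t} (h k)" for k
    using cont continuous_on_subset by blast
  have g_integrable: "integrable lborel (g k)" for k
    using borel_integrable_compact[OF compact_Icc contI[of k]] by (simp add: g_def)
  have g_integral: "integral\<^sup>L lborel (g k) = integral {-t..t} (h k)" for k
    using set_borel_integral_eq_integral(2)[OF borel_integrable_atLeastAtMost'[OF contI[of k]]]
    by (simp add: set_lebesgue_integral_def g_def)
  have prod_Basis: "(\<Prod>b\<in>Basis. F b) = (\<Prod>k\<in>UNIV. F (axis k 1))" for F :: "real^'n \<Rightarrow> real"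
    by (simp add: Basis_vec_def UNION_singleton_eq_range prod.reindex axis_eq_axis inj_on_def)
  have "indicator (cube t) z * (\<Prod>k\<in>UNIV. h k (z $ k)) = (\<Prod>k\<in>UNIV. g k (z $ k))" for z
    by (auto simp: g_def indicator_def cube_def mem_box_cart prod.distrib)
  then have integrand: "indicator (cube t) z *\<^sub>R (\<Prod>k\<in>UNIV. h k (z $ k)) = (\<Prod>b\<in>Basis. g (axis_index b) (z \<bullet> b))" for z
    by (simp add: prod_Basis cart_eq_inner_axis)
  have "compact (cube t)"
    by (simp add: cube_def)
  moreover have "continuous_on (cube t) (\<lambda>z. \<Prod>k\<in>UNIV. h k (z $ k))"
    by (intro continuous_intros continuous_on_compose2[OF cont]) auto
  ultimately have integrable: "integrable lborel (\<lambda>z. indicator (cube t) z *\<^sub>R (\<Prod>k\<in>UNIV. h k (z $ k)))"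
    by (rule borel_integrable_compact)
  have "integral (cube t) (\<lambda>z. \<Prod>k\<in>UNIV. h k (z $ k)) =
      integral UNIV (\<lambda>z. indicator (cube t) z *\<^sub>R (\<Prod>k\<in>UNIV. h k (z $ k)))"
    by (subst integral_restrict_UNIV[symmetric]) (auto intro: integral_cong simp: indicator_def)
  also have "\<dots> = integral\<^sup>L lborel (\<lambda>z. indicator (cube t) z *\<^sub>R (\<Prod>k\<in>UNIV. h k (z $ k)))"
    by (rule integral_lborel[OF integrable])
  also have "\<dots> = (\<Prod>b\<in>(Basis::(real^'n) set). integral\<^sup>L lborel (g (axis_index b)))"
    unfolding integrand by (rule lborel_integral_prod) (rule g_integrable)
  also have "\<dots> = (\<Prod>k\<in>UNIV. integral {-t..t} (h k))"
    by (simp add: prod_Basis g_integral)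
  finally show ?thesis .
qed

lemma integral_power_shift_symmetric:
  fixes y t :: real
  assumes "t \<ge> 0" "a \<le> 2"
  shows "integral {-t..t} (\<lambda>s. (y + s) ^ a) = 2 * t * (y ^ a + (if a = 2 then t\<^sup>2 / 3 else 0))"
proof -
  have "((\<lambda>s. (y + s) ^ a) has_integral (y + t) ^ Suc a / Suc a - (y + - t) ^ Suc a / Suc a) {-t..t}"
    using assms
    by (intro fundamental_theorem_of_calculus)
       (auto intro!: derivative_eq_intros simp: has_real_derivative_iff_has_vector_derivative[symmetric]
         le_Suc_eq numeral_2_eq_2 field_simps)
  moreover have "(y + t) ^ Suc a / Suc a - (y + - t) ^ Suc a / Suc a = 2 * t * (y ^ a + (if a = 2 then t\<^sup>2 / 3 else 0))"
    using assms(2) by (auto simp: le_Suc_eq numeral_2_eq_2 field_simps power2_eq_square)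
  ultimately show ?thesis
    by (simp add: integral_unique)
qed

lemma integral_cube_monomial:
  fixes x :: "real^'n::finite"
  assumes t: "t \<ge> 0" and deg: "sum \<beta> UNIV \<le> 2"
  shows "integral (cube t) (\<lambda>z. monomial \<beta> (x + z)) =
    (2 * t) ^ CARD('n) * (monomial \<beta> x + t\<^sup>2 / 6 *
      (\<Sum>k\<in>UNIV. real (\<beta> k) * real (dec_exp k \<beta> k) * monomial (dec_exp k (dec_exp k \<beta>)) x))"
proof -
  have \<beta>_le: "\<beta> k \<le> 2" for k
    using member_le_sum[of k UNIV \<beta>] deg by simp
  have "integral (cube t) (\<lambda>z. monomial \<beta> (x + z)) =
        (\<Prod>k\<in>UNIV. integral {-t..t} (\<lambda>s. (x $ k + s) ^ \<beta> k))"
    unfolding monomial_def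
    using integral_cube_prod[of "\<lambda>k s. (x $ k + s) ^ \<beta> k" t] by (simp add: continuous_intros)
  also have "\<dots> = (2 * t) ^ CARD('n) * (\<Prod>k\<in>UNIV. (x $ k) ^ \<beta> k + (if \<beta> k = 2 then t\<^sup>2 / 3 else 0))"
    by (simp add: integral_power_shift_symmetric[OF t \<beta>_le] prod.distrib)
  also have "(\<Prod>k\<in>UNIV. (x $ k) ^ \<beta> k + (if \<beta> k = 2 then t\<^sup>2 / 3 else 0)) =
     monomial \<beta> x + t\<^sup>2 / 6 * (\<Sum>k\<in>UNIV. real (\<beta> k) * real (dec_exp k \<beta> k) * monomial (dec_exp k (dec_exp k \<beta>)) x)"
  proof (cases "\<exists>k0. \<beta> k0 = 2")
    case True
    then obtain k0 where k0: "\<beta> k0 = 2" by blast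
    have others: "\<beta> k = 0" if "k \<noteq> k0" for k
      using sum_mono2[of UNIV "{k0, k}" \<beta>] that k0 deg by simp
    have "dec_exp k0 (dec_exp k0 \<beta>) = (\<lambda>_. 0)"
      using k0 others by (auto simp: dec_exp_def fun_eq_iff)
    moreover have "monomial \<beta> x = (x $ k0)\<^sup>2"
      unfolding monomial_def by (subst prod.remove[of UNIV k0]) (auto simp: k0 others intro!: prod.neutral)
    moreover have "(\<Prod>k\<in>UNIV. (x $ k) ^ \<beta> k + (if \<beta> k = 2 then t\<^sup>2 / 3 else 0)) = (x $ k0)\<^sup>2 + t\<^sup>2 / 3"
      by (subst prod.remove[of UNIV k0]) (auto simp: k0 others intro!: prod.neutral)
    moreover have "(\<Sum>k\<in>UNIV. real (\<beta> k) * real (dec_exp k \<beta> k) * monomial (dec_exp k (dec_exp k \<beta>)) x) =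
        real (\<beta> k0) * real (dec_exp k0 \<beta> k0) * monomial (dec_exp k0 (dec_exp k0 \<beta>)) x"
      by (subst sum.remove[of UNIV k0]) (auto simp: others intro!: sum.neutral)
    moreover have "dec_exp k0 \<beta> k0 = 1"
      using k0 by (simp add: dec_exp_def)
    ultimately show ?thesis
      using k0 by simp
  next
    case False
    have "\<beta> k \<le> 1" for k
    proof -
      have "\<beta> k \<noteq> 2" using False by blast
      then show ?thesis using \<beta>_le[of k] by linarith
    qed
    then have "(\<Sum>k\<in>UNIV. real (\<beta> k) * real (dec_exp k \<beta> k) * monomial (dec_exp k (dec_exp k \<beta>)) x) = 0"
      by (intro sum.neutral) (auto simp: dec_exp_def le_Suc_eq)
    with False show ?thesis
      by (simp add: monomial_def)
  qed
  finally show ?thesis .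
qed

lemma integral_cube_is_poly_deg_le_2:
  fixes g :: "real^'n::finite \<Rightarrow> real"
  assumes g: "is_poly_deg_le 2 g" and t: "t \<ge> 0"
  shows "integral (cube t) (\<lambda>z. g (x + z)) =
         (2 * t) ^ CARD('n) * (g x + t\<^sup>2 / 6 * (\<Sum>k\<in>UNIV. partial k (partial k g) x))"
proof -
  obtain c where g_eq: "g = (\<lambda>x. \<Sum>\<alpha>\<in>monomials_le 2. c \<alpha> * monomial \<alpha> x)"
    using g by (auto simp: is_poly_deg_le_iff_monomial)
  have "integral (cube t) (\<lambda>z. g (x + z)) = (\<Sum>\<alpha>\<in>monomials_le 2. c \<alpha> * integral (cube t) (\<lambda>z. monomial \<alpha> (x + z)))"
    unfolding g_eq
    by (subst integral_sum)
       (auto simp: finite_monomials_le monomial_def cube_def intro!: integrable_continuous continuous_intros)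
  also have "\<dots> = (\<Sum>\<alpha>\<in>monomials_le 2. c \<alpha> * ((2 * t) ^ CARD('n) * (monomial \<alpha> x + t\<^sup>2 / 6 *
      (\<Sum>k\<in>UNIV. real (\<alpha> k) * real (dec_exp k \<alpha> k) * monomial (dec_exp k (dec_exp k \<alpha>)) x))))"
    by (intro sum.cong refl) (simp add: integral_cube_monomial t monomials_le_def)
  also have "\<dots> = (2 * t) ^ CARD('n) * (g x + t\<^sup>2 / 6 * (\<Sum>k\<in>UNIV. partial k (partial k g) x))"
    unfolding g_eq partial_monomial_sum
    by (simp add: sum_distrib_left sum_distrib_right sum.distrib algebra_simps sum.swap[of _ UNIV])
  finally show ?thesis .
qed

lemma steklov_eq_integral_cube:
  "steklov f x t = 1 / (2 * t) ^ CARD('n) * integral (cube t) (\<lambda>z. f (x + z))"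
  for f :: "real^'n::finite \<Rightarrow> real"
  using integral_shift_cbox_plus[of "-(\<chi> i. t)" "\<chi> i. t" f x]
  by (simp add: steklov_def cube_def o_def algebra_simps)

lemma partial_integral_translate:
  fixes g :: "real^'n::finite \<Rightarrow> real"
  assumes deriv: "\<And>w s. ((\<lambda>s. g (w + s *\<^sub>R axis j 1)) has_real_derivative partial j g (w + s *\<^sub>R axis j 1)) (at s)"
    and cont: "continuous_on UNIV g" and cont_partial: "continuous_on UNIV (partial j g)"
  shows "partial j (\<lambda>y. integral (cbox a b) (\<lambda>z. g (y + z))) = (\<lambda>y. integral (cbox a b) (\<lambda>z. partial j g (y + z)))"
proof
  fix y :: "real^'n"
  let ?e = "axis j 1 :: real^'n"
  have "((\<lambda>s. g (y + s *\<^sub>R ?e + z)) has_field_derivative partial j g (y + s *\<^sub>R ?e + z)) (at s within UNIV)" for s z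
    using deriv[of "y + z" s] by (simp add: add_ac)
  moreover have "continuous_on (UNIV \<times> cbox a b) (\<lambda>(s, z). partial j g (y + s *\<^sub>R ?e + z))"
    unfolding case_prod_beta
    by (rule continuous_on_compose2[OF cont_partial]) (auto intro!: continuous_intros)
  moreover have "(\<lambda>z. g (y + s *\<^sub>R ?e + z)) integrable_on cbox a b" for s
    by (rule integrable_continuous, rule continuous_on_compose2[OF cont]) (auto intro!: continuous_intros)
  ultimately have "((\<lambda>s. integral (cbox a b) (\<lambda>z. g (y + s *\<^sub>R ?e + z))) has_field_derivative
      integral (cbox a b) (\<lambda>z. partial j g (y + 0 *\<^sub>R ?e + z))) (at 0 within UNIV)"
    by (intro leibniz_rule_field_derivative) auto
  then show "partial j (\<lambda>y. integral (cbox a b) (\<lambda>z. g (y + z))) y = integral (cbox a b) (\<lambda>z. partial j g (y + z))"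
    unfolding partial_def by (simp add: DERIV_imp_deriv)
qed

lemma partial_integral_translate_is_poly_deg_le:
  assumes "is_poly_deg_le d g"
  shows "partial j (\<lambda>y. integral (cbox a b) (\<lambda>z. g (y + z))) = (\<lambda>y. integral (cbox a b) (\<lambda>z. partial j g (y + z)))"
  using assms
  by (intro partial_integral_translate has_real_derivative_is_poly_deg_le_axis
      continuous_on_is_poly_deg_le is_poly_deg_le_partial')

lemma hessian_steklov_is_poly_deg_le_4:
  fixes f :: "real^'n::finite \<Rightarrow> real"
  assumes f: "is_poly_deg_le 4 f" and t: "t > 0"
  shows "hessian (\<lambda>y. steklov f y t) x =
         hessian f x + (t\<^sup>2 / 6) *\<^sub>R (\<Sum>k\<in>UNIV. hessian (partial k (partial k f)) 0)"
proof -
  define K where "K = 1 / (2 * t) ^ CARD('n)"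
  define g where "g y = K * f y" for y
  have g: "is_poly_deg_le 4 g"
    unfolding g_def by (rule is_poly_deg_le_cmult[OF f])
  have g2: "is_poly_deg_le 2 (partial i (partial j g))" for i j
    using is_poly_deg_le_partial[OF is_poly_deg_le_partial[OF g]] by simp
  have partial2_g: "partial i (partial j g) = (\<lambda>y. K * partial i (partial j f) y)" for i j
    unfolding g_def partial_cmult[OF f] partial_cmult[OF is_poly_deg_le_partial'[OF f]] ..
  have partial4_g: "partial k (partial k (partial i (partial j g))) x = K * partial i (partial j (partial k (partial k f))) 0"
    for i j k
  proof -
    have f2: "is_poly_deg_le 4 (partial i (partial j f))"
      using is_poly_deg_le_partial'[OF is_poly_deg_le_partial'[OF f]] .
    have "partial k (partial k (partial i (partial j g))) x = K * partial k (partial k (partial i (partial j f))) x"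
      unfolding partial2_g partial_cmult[OF f2] partial_cmult[OF is_poly_deg_le_partial'[OF f2]] ..
    also have "\<dots> = K * partial i (partial j (partial k (partial k f))) x"
      by (simp only: partial_partial_commute[OF f])
    also have "\<dots> = K * partial i (partial j (partial k (partial k f))) 0"
    proof -
      have "is_poly_deg_le 0 (partial i (partial j (partial k (partial k f))))"
        using is_poly_deg_le_partial[OF is_poly_deg_le_partial[OF is_poly_deg_le_partial[OF
            is_poly_deg_le_partial[OF f]]]] by simp
      then show ?thesis
        by (simp only: is_poly_deg_le_0_constant[of _ x 0])
    qed
    finally show ?thesis .
  qed
  have steklov_g: "(\<lambda>y. steklov f y t) = (\<lambda>y. integral (cube t) (\<lambda>z. g (y + z)))"
    by (simp add: steklov_eq_integral_cube g_def K_def)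
  have "hessian (\<lambda>y. steklov f y t) x $ i $ j =
      (hessian f x + (t\<^sup>2 / 6) *\<^sub>R (\<Sum>k\<in>UNIV. hessian (partial k (partial k f)) 0)) $ i $ j" for i j
  proof -
    have "hessian (\<lambda>y. steklov f y t) x $ i $ j = integral (cube t) (\<lambda>z. partial i (partial j g) (x + z))"
      by (simp add: steklov_g hessian_def cube_def partial_integral_translate_is_poly_deg_le[OF g]
          partial_integral_translate_is_poly_deg_le[OF is_poly_deg_le_partial'[OF g]])
    also have "\<dots> = (2 * t) ^ CARD('n) * (partial i (partial j g) x +
        t\<^sup>2 / 6 * (\<Sum>k\<in>UNIV. partial k (partial k (partial i (partial j g))) x))"
      using t by (simp add: integral_cube_is_poly_deg_le_2[OF g2])
    also have "\<dots> = partial i (partial j f) x + t\<^sup>2 / 6 * (\<Sum>k\<in>UNIV. partial i (partial j (partial k (partial k f))) 0)"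
      unfolding partial4_g unfolding partial2_g using t by (simp add: K_def field_simps sum_distrib_left)
    finally show ?thesis
      by (simp add: hessian_def)
  qed
  then show ?thesis
    by (simp add: vec_eq_iff)
qed

lemma transpose_sum: "transpose (\<Sum>k\<in>S. A k) = (\<Sum>k\<in>S. transpose (A k))"
  by (simp add: transpose_def vec_eq_iff)

lemma inner_matrix_vector_symmetric:
  fixes A :: "real^'n::finite^'n"
  assumes "transpose A = A"
  shows "u \<bullet> (A *v v) = (A *v u) \<bullet> v"
  by (metis assms dot_lmul_matrix vector_transpose_matrix)

lemma finite_eigenvalues:
  fixes A :: "real^'n::finite^'n"
  assumes sym: "transpose A = A"
  shows "finite (eigenvalues A)"
proof -
  define ev where "ev e = (SOME v. v \<noteq> 0 \<and> A *v v = e *\<^sub>R v)" for e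
  have ev: "ev e \<noteq> 0 \<and> A *v ev e = e *\<^sub>R ev e" if "e \<in> eigenvalues A" for e
    using that unfolding eigenvalues_def ev_def by (metis (mono_tags, lifting) mem_Collect_eq someI_ex)
  have "inj_on ev (eigenvalues A)"
  proof (rule inj_onI)
    fix e1 e2 assume e: "e1 \<in> eigenvalues A" "e2 \<in> eigenvalues A" "ev e1 = ev e2"
    then have "e1 *\<^sub>R ev e1 = e2 *\<^sub>R ev e1"
      using ev by metis
    then show "e1 = e2"
      using ev[OF e(1)] by (simp add: scaleR_cancel_right)
  qed
  have "pairwise orthogonal (ev ` eigenvalues A)"
  proof (clarsimp simp: pairwise_def)
    fix e1 e2 assume e: "e1 \<in> eigenvalues A" "e2 \<in> eigenvalues A" "ev e1 \<noteq> ev e2"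
    have "e1 * (ev e1 \<bullet> ev e2) = ev e1 \<bullet> (A *v ev e2)"
      using ev[OF e(1)] inner_matrix_vector_symmetric[OF sym] by simp
    also have "\<dots> = e2 * (ev e1 \<bullet> ev e2)"
      using ev[OF e(2)] by simp
    finally show "orthogonal (ev e1) (ev e2)"
      using e(3) unfolding orthogonal_def by auto
  qed
  moreover have "0 \<notin> ev ` eigenvalues A"
    using ev by auto
  ultimately have "independent (ev ` eigenvalues A)"
    using pairwise_orthogonal_independent by blast
  then show ?thesis
    using independent_bound finite_imageD \<open>inj_on ev (eigenvalues A)\<close> by blast
qed

lemma nonneg_quadratic_imp_linear_coeff_zero:
  fixes a b :: real
  assumes "\<And>s. 0 \<le> 2 * s * a + s\<^sup>2 * b"
  shows "a = 0"
proof (cases "b > 0")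
  case True
  have "0 \<le> 2 * (- a / b) * a + (- a / b)\<^sup>2 * b"
    by (rule assms)
  also have "\<dots> = - (a\<^sup>2 / b)"
    using True by (simp add: field_simps power2_eq_square)
  finally show ?thesis
    using True by (simp add: field_simps)
next
  case False
  then show ?thesis
    using assms[of 1] assms[of "- 1"] by simp
qed

lemma sphere_minimizer_eigenvector:
  fixes A :: "real^'n::finite^'n"
  assumes sym: "transpose A = A" and u: "u \<bullet> u = 1"
    and min: "\<And>v. (u \<bullet> (A *v u)) * (v \<bullet> v) \<le> v \<bullet> (A *v v)"
  shows "A *v u = (u \<bullet> (A *v u)) *\<^sub>R u"
proof -
  define m where "m = u \<bullet> (A *v u)"
  define r where "r = A *v u - m *\<^sub>R u"
  \<comment> \<open>r is orthogonal to u, so the Rayleigh quotient along u + s r has first-order term 2 s (r \<bullet> r)\<close>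
  have u_r: "u \<bullet> r = 0"
    using u by (simp add: r_def m_def inner_diff_right)
  have "(A *v u - m *\<^sub>R u) \<bullet> r = (A *v u) \<bullet> r - m * (u \<bullet> r)"
    by (simp add: inner_diff_left)
  then have r_Au: "r \<bullet> (A *v u) = r \<bullet> r"
    unfolding r_def[symmetric] u_r by (simp add: inner_commute)
  have u_Ar: "u \<bullet> (A *v r) = r \<bullet> r"
    using inner_matrix_vector_symmetric[OF sym, of u r] r_Au by (simp add: inner_commute)
  have "0 \<le> 2 * s * (r \<bullet> r) + s\<^sup>2 * (r \<bullet> (A *v r) - m * (r \<bullet> r))" for s
  proof -
    have "(u + s *\<^sub>R r) \<bullet> (A *v (u + s *\<^sub>R r)) = m + 2 * s * (r \<bullet> r) + s\<^sup>2 * (r \<bullet> (A *v r))"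
      unfolding matrix_vector_right_distrib matrix_vector_mult_scaleR inner_add_left inner_add_right inner_scaleR_left inner_scaleR_right u_Ar r_Au m_def[symmetric]
      by (simp add: power2_eq_square algebra_simps)
    moreover have "(u + s *\<^sub>R r) \<bullet> (u + s *\<^sub>R r) = 1 + s\<^sup>2 * (r \<bullet> r)"
      unfolding inner_add_left inner_add_right inner_scaleR_left inner_scaleR_right u u_r inner_commute[of r u]
      by (simp add: power2_eq_square)
    ultimately show ?thesis
      using min[of "u + s *\<^sub>R r"] unfolding m_def[symmetric] by (simp add: algebra_simps)
  qed
  then have "r \<bullet> r = 0"
    by (rule nonneg_quadratic_imp_linear_coeff_zero)
  then show ?thesis
    by (simp add: r_def m_def)
qed

lemma lambda_min_rayleigh:
  fixes A :: "real^'n::finite^'n"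
  assumes sym: "transpose A = A"
  shows "\<exists>u. norm u = 1 \<and> lambda_min A = u \<bullet> (A *v u) \<and> (\<forall>v. lambda_min A * (v \<bullet> v) \<le> v \<bullet> (A *v v))"
proof -
  let ?Q = "\<lambda>v. v \<bullet> (A *v v)"
  have cont: "continuous_on (sphere 0 1) ?Q"
    by (intro continuous_intros linear_continuous_on matrix_vector_mul_bounded_linear)
  have "sphere (0::real^'n) 1 \<noteq> {}"
    using vector_choose_size[of 1] by auto
  then obtain u where u: "u \<in> sphere 0 1" and u_min: "\<And>y. y \<in> sphere 0 1 \<Longrightarrow> ?Q u \<le> ?Q y"
    using continuous_attains_inf[OF compact_sphere _ cont] by blast
  have uu: "u \<bullet> u = 1"
    using u by (simp add: dot_square_norm)
  have Q_ge: "?Q u * (v \<bullet> v) \<le> ?Q v" for v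
  proof (cases "v = 0")
    case False
    have "?Q u \<le> ?Q ((1 / norm v) *\<^sub>R v)"
      using False by (intro u_min) simp
    also have "\<dots> = ?Q v / (v \<bullet> v)"
      by (simp add: matrix_vector_mult_scaleR power2_eq_square dot_square_norm)
    finally show ?thesis
      using False by (simp add: field_simps)
  qed simp
  have eigen: "A *v u = ?Q u *\<^sub>R u"
    by (rule sphere_minimizer_eigenvector[OF sym uu Q_ge])
  have "u \<noteq> 0"
    using u by auto
  then have "?Q u \<in> eigenvalues A"
    unfolding eigenvalues_def using eigen by blast
  moreover have "?Q u \<le> e" if e: "e \<in> eigenvalues A" for e
  proof -
    obtain w where w: "w \<noteq> 0" "A *v w = e *\<^sub>R w"
      using e unfolding eigenvalues_def by auto
    then have "?Q u * (w \<bullet> w) \<le> e * (w \<bullet> w)"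
      using Q_ge[of w] by simp
    then show ?thesis
      using w(1) by simp
  qed
  ultimately have "lambda_min A = ?Q u"
    unfolding lambda_min_def by (intro Min_eqI finite_eigenvalues[OF sym])
  then show ?thesis
    using u Q_ge by auto
qed

lemma abs_quadratic_form_le_sum_abs:
  fixes A :: "real^'n::finite^'n"
  assumes "norm u = 1"
  shows "\<bar>u \<bullet> (A *v u)\<bar> \<le> (\<Sum>i\<in>UNIV. \<Sum>j\<in>UNIV. \<bar>A $ i $ j\<bar>)"
proof -
  have u_le: "\<bar>u $ i\<bar> \<le> 1" for i
    using component_le_norm_cart[of u i] assms by simp
  have "\<bar>u \<bullet> (A *v u)\<bar> = \<bar>\<Sum>i\<in>UNIV. \<Sum>j\<in>UNIV. u $ i * A $ i $ j * u $ j\<bar>"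
    by (simp add: inner_vec_def matrix_vector_mult_def sum_distrib_left mult.assoc)
  also have "\<dots> \<le> (\<Sum>i\<in>UNIV. \<Sum>j\<in>UNIV. \<bar>u $ i * A $ i $ j * u $ j\<bar>)"
    by (rule order_trans[OF sum_abs sum_mono]) (rule sum_abs)
  also have "\<dots> \<le> (\<Sum>i\<in>UNIV. \<Sum>j\<in>UNIV. \<bar>A $ i $ j\<bar>)"
  proof (intro sum_mono)
    fix i j
    have "\<bar>u $ i\<bar> * \<bar>A $ i $ j\<bar> * \<bar>u $ j\<bar> \<le> 1 * \<bar>A $ i $ j\<bar> * 1"
      by (intro mult_mono u_le) auto
    then show "\<bar>u $ i * A $ i $ j * u $ j\<bar> \<le> \<bar>A $ i $ j\<bar>"
      by (simp add: abs_mult)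
  qed
  finally show ?thesis .
qed

lemma bdd_below_lambda_min:
  fixes A :: "'a::topological_space \<Rightarrow> real^'n::finite^'n"
  assumes "compact K" and cont: "\<And>i j. continuous_on K (\<lambda>y. A y $ i $ j)"
    and sym: "\<And>y. y \<in> K \<Longrightarrow> transpose (A y) = A y"
  shows "bdd_below ((\<lambda>y. lambda_min (A y)) ` K)"
proof -
  let ?g = "\<lambda>y. \<Sum>i\<in>UNIV. \<Sum>j\<in>UNIV. \<bar>A y $ i $ j\<bar>"
  have "compact (?g ` K)"
    using assms(1) by (intro compact_continuous_image continuous_intros cont)
  then obtain B where "\<forall>x\<in>?g ` K. \<bar>x\<bar> \<le> B"
    using compact_imp_bounded bounded_real by blast
  then have B: "\<And>y. y \<in> K \<Longrightarrow> \<bar>?g y\<bar> \<le> B"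
    by blast
  have "- B \<le> lambda_min (A y)" if y: "y \<in> K" for y
  proof -
    obtain u where "norm u = 1" "lambda_min (A y) = u \<bullet> (A y *v u)"
      using lambda_min_rayleigh[OF sym[OF y]] by blast
    then show ?thesis
      using abs_quadratic_form_le_sum_abs[of u "A y"] B[OF y] by linarith
  qed
  then show ?thesis
    by (intro bdd_belowI2)
qed

lemma psd_add_scaleR:
  fixes A B :: "real^'n::finite^'n"
  assumes "transpose A = A" "transpose B = B" "c \<ge> 0"
    and "0 \<le> lambda_min A + c * lambda_min B"
  shows "psd (A + c *\<^sub>R B)"
  unfolding psd_def
proof
  fix v :: "real^'n"
  have "lambda_min A * (v \<bullet> v) \<le> v \<bullet> (A *v v)" "lambda_min B * (v \<bullet> v) \<le> v \<bullet> (B *v v)"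
    using lambda_min_rayleigh[OF assms(1)] lambda_min_rayleigh[OF assms(2)] by blast+
  then have "(lambda_min A + c * lambda_min B) * (v \<bullet> v) \<le> v \<bullet> (A *v v) + c * (v \<bullet> (B *v v))"
    using mult_left_mono[of _ _ c] assms(3) by (simp add: distrib_right mult.assoc add_mono)
  moreover have "0 \<le> (lambda_min A + c * lambda_min B) * (v \<bullet> v)"
    using assms(4) by simp
  ultimately have "0 \<le> v \<bullet> (A *v v) + c * (v \<bullet> (B *v v))"
    by linarith
  then show "0 \<le> v \<bullet> ((A + c *\<^sub>R B) *v v)"
    by (simp add: matrix_vector_mult_add_rdistrib inner_add_right scaleR_matrix_vector_assoc[symmetric])
qed

lemma sqrt_less_imp_less_power2:
  fixes a t :: real
  assumes "sqrt a < t"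
  shows "a < t\<^sup>2"
proof -
  have "sqrt a < sqrt (t\<^sup>2)"
    using assms abs_ge_self[of t] by simp
  then show ?thesis
    by (simp only: real_sqrt_less_iff)
qed

theorem theorem2:
  fixes f :: "real^'n::finite \<Rightarrow> real" and L :: real
  assumes "is_poly_deg_le 4 f"
    and "lambda_min (\<Sum>i\<in>UNIV. hessian (partial i (partial i f)) 0) > 0"
    and "L > 0"
  shows "\<forall>x t. x \<in> cball 0 L \<and>
           t > sqrt (6 * \<bar>Inf ((\<lambda>y. lambda_min (hessian f y)) ` cball 0 L)\<bar>
                     / lambda_min (\<Sum>i\<in>UNIV. hessian (partial i (partial i f)) 0))
           \<longrightarrow> psd (hessian (\<lambda>y. steklov f y t) x)"
proof (intro allI impI)
  fix x :: "real^'n" and t :: real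
  let ?C = "\<Sum>i\<in>UNIV. hessian (partial i (partial i f)) 0"
  let ?\<theta> = "Inf ((\<lambda>y. lambda_min (hessian f y)) ` cball 0 L)"
  assume "x \<in> cball 0 L \<and> t > sqrt (6 * \<bar>?\<theta>\<bar> / lambda_min ?C)"
  then have x: "x \<in> cball 0 L" and t: "sqrt (6 * \<bar>?\<theta>\<bar> / lambda_min ?C) < t"
    by auto
  have f2: "is_poly_deg_le 4 (partial i (partial j f))" for i j
    using is_poly_deg_le_partial'[OF is_poly_deg_le_partial'[OF assms(1)]] .
  have H_sym: "transpose (hessian f y) = hessian f y" for y
    by (rule hessian_symmetric[OF assms(1)])
  have C_sym: "transpose ?C = ?C"
    by (simp add: transpose_sum hessian_symmetric[OF f2])
  have "0 \<le> sqrt (6 * \<bar>?\<theta>\<bar> / lambda_min ?C)"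
    using assms(2) by simp
  with t have t_pos: "t > 0"
    by linarith
  have "- ?\<theta> \<le> t\<^sup>2 / 6 * lambda_min ?C"
    using sqrt_less_imp_less_power2[OF t] assms(2) by (simp add: field_simps)
  moreover have "?\<theta> \<le> lambda_min (hessian f x)"
  proof (rule cInf_lower[OF imageI[OF x] bdd_below_lambda_min])
    show "continuous_on (cball 0 L) (\<lambda>y. hessian f y $ i $ j)" for i j
      unfolding hessian_def by (simp add: continuous_on_is_poly_deg_le[OF f2])
  qed (simp_all add: H_sym)
  ultimately show "psd (hessian (\<lambda>y. steklov f y t) x)"
    unfolding hessian_steklov_is_poly_deg_le_4[OF assms(1) t_pos]
    by (intro psd_add_scaleR H_sym C_sym) auto
qed

end
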